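(* Assume the structural equation model below, a budget constraint with $\gamma_g^*\in\Gamma(\tau,b)$, and the no-measurement-error (NOME) assumption that $\beta_\Phi^*$ is known exactly. Let $\hat\beta_y=\widehat{\mathrm{Cov}}(Y,Z)$ be computed from $n$ i.i.d. samples of $P(X,Y,Z)$, and assume each $(\hat\beta_y)_i$ has finite variance so that $\sqrt n((\hat\beta_y)_i-(\beta_y^* )_i)/\mathrm{Se}_i\to\mathcal{N}(0,1)$ in distribution, with $\mathrm{Se}_i$ consistently estimated by a plug-in $\widehat{\mathrm{Se}}_i$. Fix $\alpha\in(0,1)$ and let $(\delta\beta_y)_i=z_{1-\alpha/(2d_Z)}\widehat{\mathrm{Se}}_i/\sqrt n$ be the half-width of the normal-approximation $(1-\alpha/d_Z)\times100\%$ confidence interval for $(\beta_y)_i$ centered at $(\hat\beta_y)_i$ ($z_p$ the standard normal $p$-quantile). For each maximal assignment $\tilde U$ let $\hat\Gamma_{\tilde U}=\{\gamma\in\mathbb{R}^{d_Z}:|\gamma_i|\le\tau_{\tilde U_i}+(\delta\beta_y)_i\ \forall i\}$ and $\hat\Gamma_\alpha=\bigcup_{\tilde U\in\Sigma_b^{(\max)}}\hat\Gamma_{\tilde U}$. With $$\hat{\mathcal{T}}_\alpha=\{\theta\in\mathbb{R}^{d_\Phi}:\hat\beta_y-\theta\cdot\beta_\Phi^*\in\hat\Gamma_\alpha\},$$ we have, as $n\to\infty$, $P(\theta^*\in\hat{\mathcal{T}}_\alpha)\ge 1-\alpha$ asymptotically.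
   Context: Model: $Z:=f_z(\epsilon_z)$, $X:=f_x(Z,\epsilon_x)$, $Y:=\theta^*\cdot\Phi(X)+g_y(Z,\epsilon_y)$, $Z\in\mathbb{R}^{d_Z}$, known $\Phi:\Omega_X\to\mathbb{R}^{d_\Phi}$, $d_\Phi\le d_Z$. $\beta_\Phi^*=\mathrm{Cov}(\Phi(X),Z)$ ($d_\Phi\times d_Z$, columns $(\beta_\Phi^* )_i$), $\beta_y^*=\mathrm{Cov}(Y,Z)$, $\gamma_g^*=\mathrm{Cov}(g_y(Z,\epsilon_y),Z)=\beta_y^*-\theta^*\cdot\beta_\Phi^*$, with $\theta\cdot\beta_\Phi$ the vector of components $\theta\cdot(\beta_\Phi)_i$. Budget constraints: thresholds $0\le\tau_1<\dots<\tau_K<\infty$ and integer budgets $0<b_1<\dots<b_K\le d_Z$, $K\le d_Z$. $\Gamma(\tau,b)=\{\gamma\in\mathbb{R}^{d_Z}:\ \#\{i:|\gamma_i|\le\tau_\ell\}\ge b_\ell\text{ for all }\ell\in[K]\}$. Set $b_0=0$, $b_{K+1}=d_Z$, $\tau_{K+1}=+\infty$. The set $\Sigma_b^{(\max)}$ of maximal assignments consists of all $\tilde U\in\{1,\dots,K+1\}^{d_Z}$ having exactly $b_\ell-b_{\ell-1}$ components equal to $\ell$ for each $\ell\in\{1,\dots,K+1\}$; for such $\tilde U$, $\tau_{\tilde U_i}$ denotes the threshold indexed by $\tilde U_i$. Then $\Gamma(\tau,b)=\bigcup_{\tilde U\in\Sigma_b^{(\max)}}\{\gamma:|\gamma_i|\le\tau_{\tilde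 U_i}\ \forall i\}$. *)

theory Defs
  imports "HOL-Probability.Probability"
begin

definition budget_set :: "nat \<Rightarrow> (nat \<Rightarrow> real) \<Rightarrow> (nat \<Rightarrow> nat) \<Rightarrow> (real ^ 'd::finite) set" where
  "budget_set K tau b = {\<gamma>. \<forall>l\<in>{1..K}. b l \<le> card {i. \<bar>\<gamma> $ i\<bar> \<le> tau l}}"

definition ext_budget :: "nat \<Rightarrow> (nat \<Rightarrow> nat) \<Rightarrow> nat \<Rightarrow> nat \<Rightarrow> nat" where
  "ext_budget K b d l = (if l = 0 then 0 else if l = K + 1 then d else b l)"

definition max_assignments :: "nat \<Rightarrow> (nat \<Rightarrow> nat) \<Rightarrow> ('d::finite \<Rightarrow> nat) set" where
  "max_assignments K b = {U. (\<forall>i. U i \<in> {1..K+1}) \<and>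
     (\<forall>l\<in>{1..K+1}. card {i. U i = l} = ext_budget K b CARD('d) l - ext_budget K b CARD('d) (l - 1))}"

text \<open>Enlarged set hat-Gamma_alpha = union over maximal assignments U of the boxes
  |gamma_i| <= tau_(U i) + delta_i, where tau_(K+1) = +infinity (no constraint).\<close>
definition enlarged_budget_set ::
  "nat \<Rightarrow> (nat \<Rightarrow> real) \<Rightarrow> (nat \<Rightarrow> nat) \<Rightarrow> real ^ 'd::finite \<Rightarrow> (real ^ 'd) set" where
  "enlarged_budget_set K tau b \<delta> =
     (\<Union>U\<in>max_assignments K b. {\<gamma>. \<forall>i. U i = K + 1 \<or> \<bar>\<gamma> $ i\<bar> \<le> tau (U i) + \<delta> $ i})"

definition covar :: "'a measure \<Rightarrow> ('a \<Rightarrow> real) \<Rightarrow> ('a \<Rightarrow> real) \<Rightarrow> real" where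
  "covar M f g = (\<integral>x. f x * g x \<partial>M) - (\<integral>x. f x \<partial>M) * (\<integral>x. g x \<partial>M)"

definition std_normal_quantile :: "real \<Rightarrow> real" where
  "std_normal_quantile p = (THE z. cdf std_normal_distribution z = p)"

definition theta_dot :: "real ^ 'p::finite \<Rightarrow> real ^ 'd::finite ^ 'p \<Rightarrow> real ^ 'd" where
  "theta_dot \<theta> B = (\<chi> i. \<Sum>k\<in>UNIV. \<theta> $ k * B $ k $ i)"

definition sample_cov :: "nat \<Rightarrow> (nat \<Rightarrow> real) \<Rightarrow> (nat \<Rightarrow> real) \<Rightarrow> real" where
  "sample_cov n y z = (\<Sum>j<n. y j * z j) / n - ((\<Sum>j<n. y j) / n) * ((\<Sum>j<n. z j) / n)"

end

theory Submission
  imports Defs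
begin

text \<open>
  Linearity of covariance in the structural equation for \<open>Y\<close> gives
  \<open>\<beta>\<^sub>y - \<theta>\<^sup>* \<cdot> \<beta>\<^sub>\<Phi> = \<gamma>\<^sub>g\<close>, so \<open>\<theta>\<^sup>*\<close> is covered as soon as \<open>\<gamma>\<^sub>g\<close> plus the
  estimation error of \<open>\<beta>\<^sub>y\<close> lies in the enlarged set. The budget constraint puts \<open>\<gamma>\<^sub>g\<close>
  into the box of some maximal assignment, and enlarging that box by \<open>\<delta>\<close> absorbs the error
  whenever every coordinate error is within its half-width. By asymptotic normality and
  consistency of the standard errors, each coordinate fails with asymptotic probability at most
  \<open>2 (1 - \<Phi> z) = \<alpha> / d\<^sub>Z\<close>, and a union bound over the \<open>d\<^sub>Z\<close> coordinates gives
  coverage at least \<open>1 - \<alpha>\<close>.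
\<close>

lemma sorted_rank_exists:
  fixes f :: "'d::finite \<Rightarrow> 'a::linorder"
  obtains r where "bij_betw r UNIV {..<CARD('d)}" and "\<And>i j. f i < f j \<Longrightarrow> r i < r j"
proof -
  obtain xs :: "'d list" where xs: "distinct xs" "set xs = UNIV"
    using finite_distinct_list[of "UNIV :: 'd set"] by auto
  define ys where "ys = sort_key f xs"
  have ys: "distinct ys" "set ys = UNIV" "sorted (map f ys)"
    using xs by (auto simp: ys_def)
  have len: "length ys = CARD('d)"
    using ys distinct_card by fastforce
  have nth_bij: "bij_betw ((!) ys) {..<CARD('d)} UNIV"
    using ys len by (intro bij_betw_nth) auto
  define r where "r = inv_into {..<CARD('d)} ((!) ys)"
  have r_bij: "bij_betw r UNIV {..<CARD('d)}"
    unfolding r_def by (rule bij_betw_inv_into[OF nth_bij])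
  have ys_r: "ys ! r i = i" for i
    unfolding r_def using nth_bij by (simp add: bij_betw_inv_into_right)
  have "r i < r j" if "f i < f j" for i j
  proof (rule ccontr)
    assume "\<not> r i < r j"
    then have "f (ys ! r j) \<le> f (ys ! r i)"
      using sorted_nth_mono[OF ys(3), of "r j" "r i"] r_bij len
      by (auto simp: bij_betw_def)
    with that show False by (simp add: ys_r)
  qed
  with r_bij show thesis by (rule that)
qed

lemma block_assignment_exists:
  fixes r :: "'d::finite \<Rightarrow> nat" and e :: "nat \<Rightarrow> nat"
  assumes r: "bij_betw r UNIV {..<CARD('d)}"
    and e_mono: "\<And>l m. l \<le> m \<Longrightarrow> m \<le> L \<Longrightarrow> e l \<le> e m"
    and e_0: "e 0 = 0" and e_L: "e L = CARD('d)"
  obtains U where "\<And>i. U i \<in> {1..L}" and "\<And>i. r i < e (U i)"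
    and "\<And>l. l \<in> {1..L} \<Longrightarrow> card {i. U i = l} = e l - e (l - 1)"
proof -
  have r_lt: "r i < e L" for i
    using r e_L by (auto simp: bij_betw_def)
  define U where "U i = (LEAST l. r i < e l)" for i
  have U_char: "U i = l \<longleftrightarrow> e (l - 1) \<le> r i \<and> r i < e l" if "l \<in> {1..L}" for i l
  proof
    assume "U i = l"
    then show "e (l - 1) \<le> r i \<and> r i < e l"
      using LeastI[of "\<lambda>l. r i < e l", OF r_lt] not_less_Least[of "l - 1" "\<lambda>l. r i < e l"] that
      unfolding U_def by auto
  next
    assume bounds: "e (l - 1) \<le> r i \<and> r i < e l"
    show "U i = l" unfolding U_def
    proof (rule Least_equality)
      show "r i < e l" using bounds by simp
      show "l \<le> m" if "r i < e m" for m
      proof (rule ccontr)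
        assume "\<not> l \<le> m"
        then have "e m \<le> e (l - 1)" using \<open>l \<in> {1..L}\<close> by (intro e_mono) auto
        with that bounds show False by simp
      qed
    qed
  qed
  have U_le: "U i \<le> L" for i
    unfolding U_def by (rule Least_le) (rule r_lt)
  have r_U: "r i < e (U i)" for i
    unfolding U_def by (rule LeastI[of _ L]) (rule r_lt)
  have U_range: "U i \<in> {1..L}" for i
    using U_le[of i] r_U[of i] e_0 by (cases "U i") auto
  have "card {i. U i = l} = e l - e (l - 1)" if l: "l \<in> {1..L}" for l
  proof -
    have "e l \<le> CARD('d)" using e_mono[of l L] e_L l by auto
    have "r ` {i. U i = l} = {e (l - 1)..<e l} \<inter> range r"
      using U_char[OF l] by auto
    also have "\<dots> = {e (l - 1)..<e l}"
      using r \<open>e l \<le> CARD('d)\<close> by (auto simp: bij_betw_def)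
    finally have "r ` {i. U i = l} = {e (l - 1)..<e l}" .
    then have "bij_betw r {i. U i = l} {e (l - 1)..<e l}"
      by (rule bij_betw_subset[OF r subset_UNIV])
    then show ?thesis by (simp add: bij_betw_same_card)
  qed
  with U_range r_U show thesis by (rule that)
qed

lemma ext_budget_mono:
  assumes b_mono: "\<And>l. 1 \<le> l \<Longrightarrow> l < K \<Longrightarrow> b l \<le> b (Suc l)" and b_le: "b K \<le> d"
    and "l \<le> m" "m \<le> K + 1"
  shows "ext_budget K b d l \<le> ext_budget K b d m"
proof -
  have b_le_b: "b l \<le> b m" if "1 \<le> l" "l \<le> m" "m \<le> K" for l m
    using that(2,3)
  proof (induction m rule: dec_induct)
    case (step n)
    then show ?case using b_mono[of n] \<open>1 \<le> l\<close> by simp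
  qed simp
  have "b l \<le> d" if "1 \<le> l" "l \<le> K" for l
    using b_le_b[of l K] that b_le by simp
  with b_le_b show ?thesis
    using assms(3,4) unfolding ext_budget_def by auto
qed

text \<open>Rank the coordinates by \<open>\<bar>\<gamma> $ i\<bar>\<close> and send ranks \<open>b (l - 1), \<dots>, b l - 1\<close> to level \<open>l\<close>:
  since at least \<open>b l\<close> coordinates are at most \<open>tau l\<close>, so are the \<open>b l\<close> smallest ones.\<close>

lemma budget_set_imp_max_assignment:
  fixes \<gamma> :: "real ^ 'd::finite"
  assumes b_mono: "\<And>l. 1 \<le> l \<Longrightarrow> l < K \<Longrightarrow> b l \<le> b (Suc l)"
    and b_le: "b K \<le> CARD('d)"
    and \<gamma>: "\<gamma> \<in> budget_set K tau b"
  obtains U where "U \<in> max_assignments K b" and "\<And>i. U i = K + 1 \<or> \<bar>\<gamma> $ i\<bar> \<le> tau (U i)"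
proof -
  let ?e = "ext_budget K b CARD('d)"
  obtain r where r: "bij_betw r UNIV {..<CARD('d)}"
    and r_mono: "\<And>i j. \<bar>\<gamma> $ i\<bar> < \<bar>\<gamma> $ j\<bar> \<Longrightarrow> r i < r j"
    using sorted_rank_exists[of "\<lambda>i. \<bar>\<gamma> $ i\<bar>"] by blast
  have e_0: "?e 0 = 0" and e_K: "?e (K + 1) = CARD('d)"
    by (simp_all add: ext_budget_def)
  obtain U where U_range: "\<And>i. U i \<in> {1..K+1}" and r_U: "\<And>i. r i < ?e (U i)"
    and U_card: "\<And>l. l \<in> {1..K+1} \<Longrightarrow> card {i. U i = l} = ?e l - ?e (l - 1)"
    using block_assignment_exists[OF r ext_budget_mono[OF b_mono b_le] e_0 e_K] by blast
  have "\<bar>\<gamma> $ i\<bar> \<le> tau (U i)" if "U i \<noteq> K + 1" for i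
  proof (rule ccontr)
    assume not_le: "\<not> \<bar>\<gamma> $ i\<bar> \<le> tau (U i)"
    have l: "U i \<in> {1..K}" using U_range[of i] that by auto
    have "r ` {j. \<bar>\<gamma> $ j\<bar> \<le> tau (U i)} \<subseteq> {..<r i}"
    proof
      fix k assume "k \<in> r ` {j. \<bar>\<gamma> $ j\<bar> \<le> tau (U i)}"
      then obtain j where "k = r j" "\<bar>\<gamma> $ j\<bar> < \<bar>\<gamma> $ i\<bar>" using not_le by auto
      then show "k \<in> {..<r i}" using r_mono by simp
    qed
    moreover have "inj_on r {j. \<bar>\<gamma> $ j\<bar> \<le> tau (U i)}"
      using r by (auto simp: bij_betw_def intro: inj_on_subset)
    ultimately have "card {j. \<bar>\<gamma> $ j\<bar> \<le> tau (U i)} \<le> card {..<r i}"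
      by (intro card_inj_on_le) simp_all
    moreover have "b (U i) \<le> card {j. \<bar>\<gamma> $ j\<bar> \<le> tau (U i)}"
      using \<gamma> l by (auto simp: budget_set_def)
    moreover have "r i < b (U i)" using r_U[of i] l by (auto simp: ext_budget_def)
    ultimately show False by simp
  qed
  moreover have "U \<in> max_assignments K b"
    unfolding max_assignments_def using U_range U_card by blast
  ultimately show thesis using that by blast
qed

lemma add_mem_enlarged_budget_set:
  fixes \<gamma> \<epsilon> \<delta> :: "real ^ 'd::finite"
  assumes b_mono: "\<And>l. 1 \<le> l \<Longrightarrow> l < K \<Longrightarrow> b l \<le> b (Suc l)"
    and b_le: "b K \<le> CARD('d)"
    and \<gamma>: "\<gamma> \<in> budget_set K tau b" and \<epsilon>: "\<And>i. \<bar>\<epsilon> $ i\<bar> \<le> \<delta> $ i"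
  shows "\<gamma> + \<epsilon> \<in> enlarged_budget_set K tau b \<delta>"
proof -
  obtain U where "U \<in> max_assignments K b" and U: "\<And>i. U i = K + 1 \<or> \<bar>\<gamma> $ i\<bar> \<le> tau (U i)"
    using budget_set_imp_max_assignment[OF b_mono b_le \<gamma>] by blast
  moreover have "U i = K + 1 \<or> \<bar>(\<gamma> + \<epsilon>) $ i\<bar> \<le> tau (U i) + \<delta> $ i" for i
    using U[of i] \<epsilon>[of i] by auto
  ultimately show ?thesis unfolding enlarged_budget_set_def by blast
qed

lemma sets_enlarged_budget_set:
  fixes \<gamma> \<delta> :: "'a \<Rightarrow> real ^ 'd::finite"
  assumes [measurable]: "\<And>i. (\<lambda>x. \<gamma> x $ i) \<in> borel_measurable M" "\<And>i. (\<lambda>x. \<delta> x $ i) \<in> borel_measurable M"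
  shows "{x \<in> space M. \<gamma> x \<in> enlarged_budget_set K tau b (\<delta> x)} \<in> sets M"
proof -
  have "{x \<in> space M. \<gamma> x \<in> enlarged_budget_set K tau b (\<delta> x)} = {x \<in> space M. \<exists>U. U \<in> max_assignments K b \<and>
      (\<forall>i. U i = K + 1 \<or> \<bar>\<gamma> x $ i\<bar> \<le> tau (U i) + \<delta> x $ i)}"
    by (auto simp: enlarged_budget_set_def)
  then show ?thesis by simp
qed

lemma integrable_mult_of_square_integrable:
  fixes f g :: "'a \<Rightarrow> real"
  assumes [measurable]: "f \<in> borel_measurable M" "g \<in> borel_measurable M"
    and "integrable M (\<lambda>x. (f x)\<^sup>2)" "integrable M (\<lambda>x. (g x)\<^sup>2)"
  shows "integrable M (\<lambda>x. f x * g x)"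
proof (rule Bochner_Integration.integrable_bound)
  show "integrable M (\<lambda>x. (f x)\<^sup>2 + (g x)\<^sup>2)" using assms by simp
  show "AE x in M. norm (f x * g x) \<le> norm ((f x)\<^sup>2 + (g x)\<^sup>2)"
  proof (intro AE_I2)
    fix x
    have "2 * \<bar>f x\<bar> * \<bar>g x\<bar> \<le> (f x)\<^sup>2 + (g x)\<^sup>2"
      using sum_squares_bound[of "\<bar>f x\<bar>" "\<bar>g x\<bar>"] by simp
    moreover have "0 \<le> \<bar>f x\<bar> * \<bar>g x\<bar>" by simp
    ultimately have "\<bar>f x\<bar> * \<bar>g x\<bar> \<le> (f x)\<^sup>2 + (g x)\<^sup>2" by linarith
    then show "norm (f x * g x) \<le> norm ((f x)\<^sup>2 + (g x)\<^sup>2)" by (simp add: abs_mult)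
  qed
qed simp

lemma covar_inner_add_left:
  fixes \<Phi> :: "'a \<Rightarrow> real ^ 'k::finite" and g Z :: "'a \<Rightarrow> real"
  assumes "prob_space M"
    and [measurable]: "\<And>k. (\<lambda>x. \<Phi> x $ k) \<in> borel_measurable M" "g \<in> borel_measurable M"
      "Z \<in> borel_measurable M"
    and \<Phi>_sq: "\<And>k. integrable M (\<lambda>x. (\<Phi> x $ k)\<^sup>2)"
    and g_sq: "integrable M (\<lambda>x. (g x)\<^sup>2)" and Z_sq: "integrable M (\<lambda>x. (Z x)\<^sup>2)"
  shows "covar M (\<lambda>x. \<theta> \<bullet> \<Phi> x + g x) Z = (\<Sum>k\<in>UNIV. \<theta> $ k * covar M (\<lambda>x. \<Phi> x $ k) Z) + covar M g Z"
proof -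
  interpret prob_space M by fact
  have [simp]: "integrable M (\<lambda>x. \<Phi> x $ k)" "integrable M g"
      "integrable M (\<lambda>x. \<Phi> x $ k * Z x)" "integrable M (\<lambda>x. g x * Z x)" for k
    using \<Phi>_sq g_sq Z_sq
    by (auto intro: square_integrable_imp_integrable integrable_mult_of_square_integrable)
  have mixed: "(\<integral>x. (\<theta> \<bullet> \<Phi> x + g x) * Z x \<partial>M)
      = (\<Sum>k\<in>UNIV. \<theta> $ k * (\<integral>x. \<Phi> x $ k * Z x \<partial>M)) + (\<integral>x. g x * Z x \<partial>M)"
    by (simp add: inner_vec_def distrib_right sum_distrib_right mult.assoc)
  have mean: "(\<integral>x. \<theta> \<bullet> \<Phi> x + g x \<partial>M) = (\<Sum>k\<in>UNIV. \<theta> $ k * (\<integral>x. \<Phi> x $ k \<partial>M)) + (\<integral>x. g x \<partial>M)"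
    by (simp add: inner_vec_def)
  show ?thesis unfolding covar_def mixed mean
    by (simp add: algebra_simps sum_subtractf sum_distrib_left sum_distrib_right)
qed

lemma covar_vec_structural_identity:
  fixes \<Phi> :: "'a \<Rightarrow> real ^ 'k::finite" and g :: "'a \<Rightarrow> real" and Z :: "'a \<Rightarrow> real ^ 'd::finite"
  assumes "prob_space M"
    and "\<And>k. (\<lambda>x. \<Phi> x $ k) \<in> borel_measurable M \<and> integrable M (\<lambda>x. (\<Phi> x $ k)\<^sup>2)"
    and "g \<in> borel_measurable M \<and> integrable M (\<lambda>x. (g x)\<^sup>2)"
    and "\<And>i. (\<lambda>x. Z x $ i) \<in> borel_measurable M \<and> integrable M (\<lambda>x. (Z x $ i)\<^sup>2)"
  shows "(\<chi> i. covar M (\<lambda>x. \<theta> \<bullet> \<Phi> x + g x) (\<lambda>x. Z x $ i))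
      - theta_dot \<theta> (\<chi> k i. covar M (\<lambda>x. \<Phi> x $ k) (\<lambda>x. Z x $ i))
    = (\<chi> i. covar M g (\<lambda>x. Z x $ i))"
  using assms by (simp add: vec_eq_iff theta_dot_def covar_inner_add_left)

abbreviation std_normal_cdf :: "real \<Rightarrow> real" where
  "std_normal_cdf \<equiv> cdf std_normal_distribution"

lemma std_normal_distribution_singleton: "measure std_normal_distribution {x} = 0"
proof -
  have "AE y in lborel. y \<in> {x} \<longrightarrow> ennreal (std_normal_density y) = 0"
    by (rule AE_I'[of "{x}"]) auto
  then have "{x} \<in> null_sets std_normal_distribution"
    by (subst null_sets_density_iff) auto
  then show ?thesis by (simp add: measure_def null_setsD1)
qed

lemma isCont_std_normal_cdf: "isCont std_normal_cdf x"
proof -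
  interpret real_distribution std_normal_distribution by (rule real_dist_normal_dist)
  show ?thesis using isCont_cdf std_normal_distribution_singleton by simp
qed

lemma std_normal_cdf_minus: "std_normal_cdf (- x) = 1 - std_normal_cdf x"
proof -
  interpret real_distribution std_normal_distribution by (rule real_dist_normal_dist)
  let ?f = "\<lambda>y. ennreal (std_normal_density y)"
  have "emeasure std_normal_distribution {..-x} = (\<integral>\<^sup>+y. ?f y * indicator {..-x} y \<partial>lborel)"
    by (subst emeasure_density) auto
  also have "\<dots> = (\<integral>\<^sup>+y. ?f (0 + -1 * y) * indicator {..-x} (0 + -1 * y) \<partial>lborel)"
    by (subst nn_integral_real_affine[where c="-1" and t=0]) auto
  also have "\<dots> = (\<integral>\<^sup>+y. ?f y * indicator {x..} y \<partial>lborel)"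
    by (intro nn_integral_cong) (auto simp: std_normal_density_def indicator_def)
  also have "\<dots> = emeasure std_normal_distribution {x..}"
    by (subst emeasure_density) auto
  finally have "std_normal_cdf (- x) = measure std_normal_distribution {x..}"
    by (simp add: cdf_def2 measure_def)
  also have "\<dots> = measure std_normal_distribution ({x<..} \<union> {x})"
    by (simp add: ivl_disj_un_singleton(1)[symmetric] Un_commute)
  also have "\<dots> = measure std_normal_distribution {x<..}"
    using finite_measure_Union[of "{x<..}" "{x}"] std_normal_distribution_singleton by simp
  also have "\<dots> = 1 - std_normal_cdf x"
    using prob_compl[of "{..x}"] by (simp add: cdf_def2 Diff_eq Compl_atMost)
  finally show ?thesis .
qed

lemma std_normal_cdf_strict_mono:
  assumes "x < y"
  shows "std_normal_cdf x < std_normal_cdf y"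
proof -
  interpret real_distribution std_normal_distribution by (rule real_dist_normal_dist)
  define c where "c = std_normal_density (\<bar>x\<bar> + \<bar>y\<bar>)"
  have c_pos: "0 < c" unfolding c_def by (rule normal_density_pos) simp
  have c_le: "c \<le> std_normal_density t" if "t \<in> {x<..y}" for t
  proof -
    have "\<bar>t\<bar> \<le> \<bar>x\<bar> + \<bar>y\<bar>" using that by auto
    then have "t\<^sup>2 \<le> (\<bar>x\<bar> + \<bar>y\<bar>)\<^sup>2" by (metis abs_ge_zero power2_abs power_mono)
    then show ?thesis unfolding c_def std_normal_density_def by (intro mult_left_mono) auto
  qed
  have "ennreal (c * (y - x)) = (\<integral>\<^sup>+t. ennreal c * indicator {x<..y} t \<partial>lborel)"
    using assms c_pos by (simp add: nn_integral_cmult_indicator ennreal_mult)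
  also have "\<dots> \<le> (\<integral>\<^sup>+t. ennreal (std_normal_density t) * indicator {x<..y} t \<partial>lborel)"
    by (intro nn_integral_mono) (auto simp: indicator_def c_le)
  also have "\<dots> = emeasure std_normal_distribution {x<..y}"
    by (subst emeasure_density) auto
  finally have "c * (y - x) \<le> measure std_normal_distribution {x<..y}"
    by (simp add: emeasure_eq_measure)
  moreover have "0 < c * (y - x)" using c_pos assms by simp
  ultimately show ?thesis using cdf_diff_eq[OF assms] by simp
qed

lemma std_normal_cdf_quantile:
  assumes "0 < p" "p < 1"
  shows "std_normal_cdf (std_normal_quantile p) = p"
proof -
  interpret real_distribution std_normal_distribution by (rule real_dist_normal_dist)
  have "eventually (\<lambda>z. std_normal_cdf z < p) at_bot"
    using cdf_lim_at_bot assms by (simp add: order_tendsto_iff)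
  then obtain a where a: "std_normal_cdf a < p" by (auto simp: eventually_at_bot_linorder)
  have "eventually (\<lambda>z. p < std_normal_cdf z) at_top"
    using cdf_lim_at_top_prob assms by (simp add: order_tendsto_iff)
  then obtain b where b: "p < std_normal_cdf b" by (auto simp: eventually_at_top_linorder)
  have "a \<le> b"
    using a b cdf_nondecreasing[of b a] by (cases "a \<le> b") auto
  then obtain z where z: "std_normal_cdf z = p"
    using IVT[of std_normal_cdf a p b] a b isCont_std_normal_cdf by auto
  have "\<exists>!z. std_normal_cdf z = p"
    using z std_normal_cdf_strict_mono by (metis linorder_neqE_linordered_idom order_less_irrefl)
  then show ?thesis unfolding std_normal_quantile_def by (rule theI')
qed

lemma std_normal_quantile_pos:
  assumes "1/2 < p" "p < 1"
  shows "0 < std_normal_quantile p"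
proof (rule ccontr)
  assume "\<not> 0 < std_normal_quantile p"
  then have "std_normal_cdf (std_normal_quantile p) \<le> std_normal_cdf 0"
    using std_normal_cdf_strict_mono[of "std_normal_quantile p" 0] by fastforce
  moreover have "std_normal_cdf 0 = 1/2" using std_normal_cdf_minus[of 0] by simp
  ultimately show False using std_normal_cdf_quantile[of p] assms by simp
qed

lemma abs_gt_prob_le_cdf:
  fixes W :: "'a \<Rightarrow> real"
  assumes "prob_space M" and [measurable]: "W \<in> borel_measurable M"
  shows "measure M {x \<in> space M. c < \<bar>W x\<bar>}
    \<le> cdf (distr M borel W) (- c) + (1 - cdf (distr M borel W) c)"
proof -
  interpret prob_space M by fact
  have cdf_W: "cdf (distr M borel W) t = measure M {x \<in> space M. W x \<le> t}" for t
    unfolding cdf_def2 by (subst measure_distr) (auto intro!: arg_cong[where f="measure M"])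
  have "{x \<in> space M. c < \<bar>W x\<bar>}
      \<subseteq> {x \<in> space M. W x \<le> - c} \<union> (space M - {x \<in> space M. W x \<le> c})"
    by auto
  then have "measure M {x \<in> space M. c < \<bar>W x\<bar>}
      \<le> measure M {x \<in> space M. W x \<le> - c} + measure M (space M - {x \<in> space M. W x \<le> c})"
    by (intro order.trans[OF finite_measure_mono measure_Un_le]) auto
  then show ?thesis by (simp add: prob_compl cdf_W)
qed

lemma studentized_tail_eventually_less:
  fixes W sh :: "nat \<Rightarrow> 'a \<Rightarrow> real"
  assumes "prob_space M" and [measurable]: "\<And>n. W n \<in> borel_measurable M" "\<And>n. sh n \<in> borel_measurable M"
    and W_lim: "weak_conv_m (\<lambda>n. distr M borel (W n)) std_normal_distribution"
    and \<sigma>: "0 < \<sigma>"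
    and sh_lim: "\<And>\<epsilon>. 0 < \<epsilon> \<Longrightarrow> (\<lambda>n. measure M {x \<in> space M. \<epsilon> < \<bar>sh n x - \<sigma>\<bar>}) \<longlonglongrightarrow> 0"
    and z: "0 < z" and \<eta>: "0 < \<eta>"
  shows "\<forall>\<^sub>F n in sequentially.
    measure M {x \<in> space M. z * sh n x < \<sigma> * \<bar>W n x\<bar>} < 2 * (1 - std_normal_cdf z) + \<eta>"
proof -
  interpret prob_space M by fact
  have "(std_normal_cdf \<longlongrightarrow> std_normal_cdf z) (at_left z)"
    using isCont_std_normal_cdf[of z] unfolding isCont_def by (rule filterlim_mono) (simp_all add: at_le)
  then have "\<forall>\<^sub>F c in at_left z. std_normal_cdf z - \<eta> / 2 < std_normal_cdf c \<and> c \<in> {0<..<z}"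
    using \<eta> z by (intro eventually_conj order_tendstoD(1) eventually_at_left_real) auto
  then obtain c where c: "std_normal_cdf z - \<eta> / 2 < std_normal_cdf c" "0 < c" "c < z"
    using eventually_happens[of _ "at_left z"] by auto
  define \<epsilon> where "\<epsilon> = (z - c) / z"
  have \<epsilon>: "0 < \<epsilon>" using c z by (simp add: \<epsilon>_def)
  let ?F = "\<lambda>n. cdf (distr M borel (W n))"
  define h where "h n = ?F n (- c) + (1 - ?F n c) + measure M {x \<in> space M. \<epsilon> * \<sigma> < \<bar>sh n x - \<sigma>\<bar>}" for n
  have "(\<lambda>n. ?F n t) \<longlonglongrightarrow> std_normal_cdf t" for t
    using W_lim isCont_std_normal_cdf unfolding weak_conv_m_def weak_conv_def by blast
  then have "h \<longlonglongrightarrow> std_normal_cdf (- c) + (1 - std_normal_cdf c) + 0"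
    unfolding h_def using \<epsilon> \<sigma> by (intro tendsto_intros sh_lim) simp_all
  moreover have "std_normal_cdf (- c) + (1 - std_normal_cdf c) + 0 < 2 * (1 - std_normal_cdf z) + \<eta>"
    using c(1) by (simp add: std_normal_cdf_minus)
  ultimately have "\<forall>\<^sub>F n in sequentially. h n < 2 * (1 - std_normal_cdf z) + \<eta>"
    by (rule order_tendstoD(2))
  moreover have "measure M {x \<in> space M. z * sh n x < \<sigma> * \<bar>W n x\<bar>} \<le> h n" for n
  proof -
    have "\<sigma> * \<bar>W n x\<bar> \<le> z * sh n x" if "\<bar>W n x\<bar> \<le> c" "\<bar>sh n x - \<sigma>\<bar> \<le> \<epsilon> * \<sigma>" for x
    proof -
      have "\<sigma> * \<bar>W n x\<bar> \<le> \<sigma> * c" using that(1) \<sigma> by simp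
      also have "\<dots> = z * ((1 - \<epsilon>) * \<sigma>)" using z by (simp add: \<epsilon>_def field_simps)
      also have "\<dots> \<le> z * sh n x" using that(2) z by (intro mult_left_mono) (auto simp: algebra_simps)
      finally show ?thesis .
    qed
    then have "{x \<in> space M. z * sh n x < \<sigma> * \<bar>W n x\<bar>}
        \<subseteq> {x \<in> space M. c < \<bar>W n x\<bar>} \<union> {x \<in> space M. \<epsilon> * \<sigma> < \<bar>sh n x - \<sigma>\<bar>}"
      by (force simp: not_le[symmetric])
    then have "measure M {x \<in> space M. z * sh n x < \<sigma> * \<bar>W n x\<bar>}
        \<le> measure M {x \<in> space M. c < \<bar>W n x\<bar>} + measure M {x \<in> space M. \<epsilon> * \<sigma> < \<bar>sh n x - \<sigma>\<bar>}"
      by (intro order.trans[OF finite_measure_mono measure_Un_le]) auto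
    then show ?thesis
      using abs_gt_prob_le_cdf[OF \<open>prob_space M\<close>, of "W n" c] unfolding h_def by simp
  qed
  ultimately show ?thesis
    by (elim eventually_mono) (rule le_less_trans)
qed

lemma simultaneous_coverage_liminf:
  fixes W sh :: "nat \<Rightarrow> 'i::finite \<Rightarrow> 'a \<Rightarrow> real" and \<sigma> :: "'i \<Rightarrow> real"
  assumes "prob_space M" and A: "\<And>n. A n \<in> sets M"
    and cover: "\<And>n x. 0 < n \<Longrightarrow> x \<in> space M \<Longrightarrow> (\<And>i. \<sigma> i * \<bar>W n i x\<bar> \<le> z * sh n i x) \<Longrightarrow> x \<in> A n"
    and [measurable]: "\<And>n i. W n i \<in> borel_measurable M" "\<And>n i. sh n i \<in> borel_measurable M"
    and W_lim: "\<And>i. weak_conv_m (\<lambda>n. distr M borel (W n i)) std_normal_distribution"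
    and \<sigma>: "\<And>i. 0 < \<sigma> i"
    and sh_lim: "\<And>i \<epsilon>. 0 < \<epsilon> \<Longrightarrow> (\<lambda>n. measure M {x \<in> space M. \<epsilon> < \<bar>sh n i x - \<sigma> i\<bar>}) \<longlonglongrightarrow> 0"
    and z: "0 < z"
  shows "ereal (1 - 2 * CARD('i) * (1 - std_normal_cdf z)) \<le> liminf (\<lambda>n. ereal (measure M (A n)))"
proof -
  interpret prob_space M by fact
  let ?a = "1 - 2 * CARD('i) * (1 - std_normal_cdf z)"
  define E where "E n i = {x \<in> space M. z * sh n i x < \<sigma> i * \<bar>W n i x\<bar>}" for n i
  have E_sets: "E n i \<in> sets M" for n i unfolding E_def by measurable
  have union_bound: "1 - (\<Sum>i\<in>UNIV. measure M (E n i)) \<le> measure M (A n)" if "0 < n" for n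
  proof -
    have "space M - (\<Union>i. E n i) \<subseteq> A n"
      using cover[OF that] by (force simp: E_def not_less)
    then have "measure M (space M - (\<Union>i. E n i)) \<le> measure M (A n)"
      using A by (intro finite_measure_mono)
    moreover have "measure M (\<Union>i. E n i) \<le> (\<Sum>i\<in>UNIV. measure M (E n i))"
      using E_sets by (intro finite_measure_subadditive_finite) auto
    ultimately show ?thesis
      using prob_compl[of "\<Union>i. E n i"] E_sets by auto
  qed
  have coverage_eventually: "\<forall>\<^sub>F n in sequentially. ?a - \<eta> < measure M (A n)" if \<eta>: "0 < \<eta>" for \<eta>
  proof -
    have "\<forall>\<^sub>F n in sequentially. \<forall>i. measure M (E n i) < 2 * (1 - std_normal_cdf z) + \<eta> / CARD('i)"
      unfolding E_def
    proof (rule eventually_all_finite)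
      show "\<forall>\<^sub>F n in sequentially. measure M {x \<in> space M. z * sh n i x < \<sigma> i * \<bar>W n i x\<bar>}
          < 2 * (1 - std_normal_cdf z) + \<eta> / CARD('i)" for i
        using \<eta> by (intro studentized_tail_eventually_less W_lim sh_lim \<sigma> z \<open>prob_space M\<close>) auto
    qed
    then show ?thesis
      using eventually_gt_at_top[of 0]
    proof eventually_elim
      case (elim n)
      have "(\<Sum>i\<in>UNIV. measure M (E n i)) < (\<Sum>i\<in>(UNIV::'i set). 2 * (1 - std_normal_cdf z) + \<eta> / CARD('i))"
        using elim(1) by (intro sum_strict_mono) auto
      then show ?case using union_bound[OF elim(2)] by (simp add: algebra_simps)
    qed
  qed
  show ?thesis
    unfolding liminf_SUP_INF[symmetric] le_Liminf_iff
  proof (intro allI impI)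
    fix y :: ereal assume y: "y < ereal ?a"
    show "\<forall>\<^sub>F n in sequentially. y < ereal (measure M (A n))"
    proof (cases y)
      case (real r)
      then have "0 < ?a - r" using y by simp
      from coverage_eventually[OF this] show ?thesis by (rule eventually_mono) (simp add: real)
    qed (use y in auto)
  qed
qed

lemma borel_measurable_vec_nth:
  fixes f :: "'a \<Rightarrow> real ^ 'n::finite"
  assumes "f \<in> borel_measurable M"
  shows "(\<lambda>x. f x $ i) \<in> borel_measurable M"
proof -
  have "(\<lambda>v :: real ^ 'n. v $ i) \<in> borel_measurable borel"
    by (intro borel_measurable_continuous_onI continuous_intros)
  with assms show ?thesis by (rule measurable_compose)
qed

lemma borel_measurable_sample_cov [measurable]:
  assumes [measurable]: "\<And>j. (\<lambda>x. y j x) \<in> borel_measurable M" "\<And>j. (\<lambda>x. z j x) \<in> borel_measurable M"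
  shows "(\<lambda>x. sample_cov n (\<lambda>j. y j x) (\<lambda>j. z j x)) \<in> borel_measurable M"
  unfolding sample_cov_def by measurable

theorem theorem4:
  fixes P :: "'w measure" and S :: "'s measure"
    and fz :: "'ez \<Rightarrow> real ^ 'dz::finite" and fx :: "real ^ 'dz \<Rightarrow> 'ex \<Rightarrow> 'x"
    and gy :: "real ^ 'dz \<Rightarrow> 'ey \<Rightarrow> real"
    and Ez :: "'w \<Rightarrow> 'ez" and Ex :: "'w \<Rightarrow> 'ex" and Ey :: "'w \<Rightarrow> 'ey"
    and Zv :: "'w \<Rightarrow> real ^ 'dz" and Xv :: "'w \<Rightarrow> 'x" and Yv :: "'w \<Rightarrow> real"
    and Phi :: "'x \<Rightarrow> real ^ 'dp::finite" and \<theta>s :: "real ^ 'dp"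
    and K :: nat and tau :: "nat \<Rightarrow> real" and b :: "nat \<Rightarrow> nat" and \<alpha> :: real
    and Smp :: "nat \<Rightarrow> 's \<Rightarrow> 'w"
    and Se :: "real ^ 'dz" and sehat :: "nat \<Rightarrow> 's \<Rightarrow> real ^ 'dz"
    and beta_Phi :: "real ^ 'dz ^ 'dp" and beta_y gamma_g :: "real ^ 'dz"
    and beta_hat delta :: "nat \<Rightarrow> 's \<Rightarrow> real ^ 'dz"
    and T_hat :: "nat \<Rightarrow> 's \<Rightarrow> (real ^ 'dp) set"
  assumes P_prob: "prob_space P" and S_prob: "prob_space S"
    \<comment> \<open>structural equation model\<close>
    and Z_eq: "\<And>\<omega>. Zv \<omega> = fz (Ez \<omega>)"
    and X_eq: "\<And>\<omega>. Xv \<omega> = fx (Zv \<omega>) (Ex \<omega>)"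
    and Y_eq: "\<And>\<omega>. Yv \<omega> = \<theta>s \<bullet> Phi (Xv \<omega>) + gy (Zv \<omega>) (Ey \<omega>)"
    and dims: "CARD('dp) \<le> CARD('dz)"
    \<comment> \<open>finite second moments so that the population covariances exist\<close>
    and Z_L2: "\<And>i. (\<lambda>\<omega>. Zv \<omega> $ i) \<in> borel_measurable P \<and> integrable P (\<lambda>\<omega>. (Zv \<omega> $ i)\<^sup>2)"
    and Phi_L2: "\<And>k. (\<lambda>\<omega>. Phi (Xv \<omega>) $ k) \<in> borel_measurable P
                     \<and> integrable P (\<lambda>\<omega>. (Phi (Xv \<omega>) $ k)\<^sup>2)"
    and g_L2: "(\<lambda>\<omega>. gy (Zv \<omega>) (Ey \<omega>)) \<in> borel_measurable P
               \<and> integrable P (\<lambda>\<omega>. (gy (Zv \<omega>) (Ey \<omega>))\<^sup>2)"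
    \<comment> \<open>population covariances\<close>
    and beta_Phi_def: "beta_Phi = (\<chi> k i. covar P (\<lambda>\<omega>. Phi (Xv \<omega>) $ k) (\<lambda>\<omega>. Zv \<omega> $ i))"
    and beta_y_def: "beta_y = (\<chi> i. covar P Yv (\<lambda>\<omega>. Zv \<omega> $ i))"
    and gamma_g_def: "gamma_g = (\<chi> i. covar P (\<lambda>\<omega>. gy (Zv \<omega>) (Ey \<omega>)) (\<lambda>\<omega>. Zv \<omega> $ i))"
    \<comment> \<open>budget constraint\<close>
    and K_pos: "1 \<le> K" and K_le: "K \<le> CARD('dz)"
    and tau_nonneg: "0 \<le> tau 1" and tau_mono: "\<And>l. 1 \<le> l \<Longrightarrow> l < K \<Longrightarrow> tau l < tau (Suc l)"
    and b_pos: "0 < b 1" and b_mono: "\<And>l. 1 \<le> l \<Longrightarrow> l < K \<Longrightarrow> b l < b (Suc l)"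
    and b_le: "b K \<le> CARD('dz)"
    and gamma_budget: "gamma_g \<in> budget_set K tau b"
    \<comment> \<open>i.i.d. samples from the population\<close>
    and iid_indep: "prob_space.indep_vars S (\<lambda>_. P) Smp UNIV"
    and iid_distr: "\<And>j. distr S P (Smp j) = P"
    and beta_hat_def: "\<And>n s. beta_hat n s =
          (\<chi> i. sample_cov n (\<lambda>j. Yv (Smp j s)) (\<lambda>j. Zv (Smp j s) $ i))"
    and beta_hat_var: "\<And>n i. integrable S (\<lambda>s. (beta_hat n s $ i)\<^sup>2)"
    \<comment> \<open>asymptotic normality\<close>
    and Se_pos: "\<And>i. 0 < Se $ i"
    and asym_normal: "\<And>i. weak_conv_m
          (\<lambda>n. distr S borel (\<lambda>s. sqrt (real n) * (beta_hat n s $ i - beta_y $ i) / Se $ i))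
          std_normal_distribution"
    \<comment> \<open>consistent plug-in standard errors\<close>
    and sehat_meas: "\<And>n. sehat n \<in> borel_measurable S"
    and sehat_cons: "\<And>i \<epsilon>. 0 < \<epsilon> \<Longrightarrow>
          (\<lambda>n. measure S {s \<in> space S. \<epsilon> < \<bar>sehat n s $ i - Se $ i\<bar>}) \<longlonglongrightarrow> 0"
    and alpha: "0 < \<alpha>" "\<alpha> < 1"
    and delta_def: "\<And>n s. delta n s =
          (\<chi> i. std_normal_quantile (1 - \<alpha> / (2 * real CARD('dz))) * sehat n s $ i / sqrt (real n))"
    and T_hat_def: "\<And>n s. T_hat n s =
          {\<theta>. beta_hat n s - theta_dot \<theta> beta_Phi \<in> enlarged_budget_set K tau b (delta n s)}"
  shows "ereal (1 - \<alpha>) \<le> liminf (\<lambda>n. ereal (measure S {s \<in> space S. \<theta>s \<in> T_hat n s}))"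
proof -
  interpret S: prob_space S by (rule S_prob)
  let ?p = "1 - \<alpha> / (2 * CARD('dz))"
  define z where "z = std_normal_quantile ?p"
  have "1/2 < ?p" "?p < 1"
    using alpha by (auto simp: field_simps intro: order.strict_trans2[of _ 1])
  then have z_pos: "0 < z" and cdf_z: "std_normal_cdf z = ?p"
    unfolding z_def by (auto intro: std_normal_quantile_pos std_normal_cdf_quantile)
  have Smp_meas: "Smp j \<in> measurable S P" for j
    using iid_indep unfolding S.indep_vars_def by auto
  have [measurable]: "(\<lambda>\<omega>. Zv \<omega> $ i) \<in> borel_measurable P" "(\<lambda>\<omega>. Phi (Xv \<omega>) $ k) \<in> borel_measurable P"
      "(\<lambda>\<omega>. gy (Zv \<omega>) (Ey \<omega>)) \<in> borel_measurable P" for i k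
    using Z_L2 Phi_L2 g_L2 by blast+
  have "Yv \<in> borel_measurable P"
    unfolding Y_eq[abs_def] inner_vec_def by measurable
  then have [measurable]: "(\<lambda>s. Yv (Smp j s)) \<in> borel_measurable S" "(\<lambda>s. Zv (Smp j s) $ i) \<in> borel_measurable S" for i j
    using Smp_meas by (auto intro: measurable_compose[of _ S P])
  have [measurable]: "(\<lambda>s. beta_hat n s $ i) \<in> borel_measurable S" "(\<lambda>s. sehat n s $ i) \<in> borel_measurable S" for n i
    using sehat_meas by (simp_all add: beta_hat_def borel_measurable_vec_nth)
  have gamma_eq: "beta_y - theta_dot \<theta>s beta_Phi = gamma_g"
    unfolding beta_y_def beta_Phi_def gamma_g_def Y_eq[abs_def]
    by (rule covar_vec_structural_identity[OF P_prob Phi_L2 g_L2 Z_L2])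
  define W where "W n i s = sqrt (real n) * (beta_hat n s $ i - beta_y $ i) / Se $ i" for n i s
  have cover: "\<theta>s \<in> T_hat n s" if "0 < n" "\<And>i. Se $ i * \<bar>W n i s\<bar> \<le> z * sehat n s $ i" for n s
  proof -
    have "\<bar>(beta_hat n s - beta_y) $ i\<bar> \<le> delta n s $ i" for i
    proof -
      have "Se $ i * \<bar>W n i s\<bar> = sqrt n * \<bar>(beta_hat n s - beta_y) $ i\<bar>"
        using Se_pos[of i] by (simp add: W_def abs_mult)
      then have "sqrt n * \<bar>(beta_hat n s - beta_y) $ i\<bar> \<le> z * sehat n s $ i"
        using that(2)[of i] by simp
      then show ?thesis
        using that(1) by (simp add: delta_def z_def pos_le_divide_eq mult.commute)
    qed
    then have "gamma_g + (beta_hat n s - beta_y) \<in> enlarged_budget_set K tau b (delta n s)"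
      using b_mono b_le gamma_budget by (intro add_mem_enlarged_budget_set) (auto intro: less_imp_le)
    then show ?thesis by (simp add: T_hat_def gamma_eq[symmetric])
  qed
  have coverage_sets: "{s \<in> space S. \<theta>s \<in> T_hat n s} \<in> sets S" for n
    unfolding T_hat_def mem_Collect_eq by (rule sets_enlarged_budget_set) (simp_all add: delta_def)
  have "ereal (1 - 2 * CARD('dz) * (1 - std_normal_cdf z))
      \<le> liminf (\<lambda>n. ereal (measure S {s \<in> space S. \<theta>s \<in> T_hat n s}))"
  proof (rule simultaneous_coverage_liminf[OF S_prob coverage_sets,
        where W = W and sh = "\<lambda>n i s. sehat n s $ i" and \<sigma> = "\<lambda>i. Se $ i"])
    show "W n i \<in> borel_measurable S" for n i unfolding W_def by measurable
    show "weak_conv_m (\<lambda>n. distr S borel (W n i)) std_normal_distribution" for i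
      unfolding W_def by (rule asym_normal)
  qed (use cover Se_pos sehat_cons z_pos in auto)
  then show ?thesis using cdf_z by simp
qed

end
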